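(* Let $G=(V,E)$ be a graph with nonnegative edge lengths $l_e$, root $r$, and integer demands $d_v>0$ on a set of demand nodes, with total demand $D=\sum_v d_v$. Fix $\epsilon>0$, let $K=\lceil \log_{1+\epsilon} D\rceil$, $M_i=(1+\epsilon)^i$ and $A_i(x)=\min\{x,M_i\}$ for $0\le i\le K$. Run the following procedure: (1) for each $i=0,\dots,K$ let $T_i$ be a routing tree returned by a (deterministic) $\lambda$-approximation algorithm for the single-sink rent-or-buy problem with cost function $A_i$; (2) for $i=1,\dots,K$ in increasing order, if $A_i(T_{i-1})<A_i(T_i)$ set $T_i\leftarrow T_{i-1}$; (3) for $i=K-1,\dots,0$ in decreasing order, if $A_i(T_{i+1})<A_i(T_i)$ set $T_i\leftarrow T_{i+1}$. Let $R_i$ and $B_i$ be the rent cost and normalized buy cost of the resulting tree $T_i$ (with respect to $M_i$). Then for every $i$ with $0\le i<K$ we have $B_i\ge B_{i+1}$ and $R_i\le R_{i+1}$.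
   Context: A routing tree is a tree in $G$ containing $r$ and all demand nodes; each demand node $v$ sends $d_v$ units of flow to $r$ along its unique tree path, and $x_e$ denotes the total flow on edge $e$. For a function $f$, the cost of a routing tree $T$ is $f(T)=\sum_{e\in T} l_e f(x_e)$. The single-sink rent-or-buy (SSRoB) problem with parameter $M$ is to find a routing tree minimizing $A(T)$ where $A(x)=\min\{x,M\}$; a $\lambda$-approximation algorithm returns a routing tree whose cost is at most $\lambda$ times the optimum. For a routing tree $T_i$ with flows $x_e$, its rent cost is $R_i=\sum_{e\in T_i,\,x_e<M_i} l_e A_i(x_e)$ and its normalized buy cost is $B_i=\sum_{e\in T_i,\,x_e\ge M_i} l_e$, so that $A_i(T_i)=R_i+M_iB_i$. *)

theory Defs
  imports Complex_Main
begin

text \<open>Undirected graphs: an edge is a 2-element vertex set. A subgraph is a set of edges.\<close>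

definition is_graph :: "'a set \<Rightarrow> 'a set set \<Rightarrow> bool" where
  "is_graph V E \<longleftrightarrow> finite V \<and> (\<forall>e\<in>E. \<exists>u v. e = {u, v} \<and> u \<in> V \<and> v \<in> V \<and> u \<noteq> v)"

definition path_edges :: "'a list \<Rightarrow> 'a set set" where
  "path_edges xs = set (map (\<lambda>(a, b). {a, b}) (zip xs (tl xs)))"

definition is_path :: "'a set set \<Rightarrow> 'a list \<Rightarrow> bool" where
  "is_path T xs \<longleftrightarrow> xs \<noteq> [] \<and> distinct xs \<and> path_edges xs \<subseteq> T"

definition tree_verts :: "'a \<Rightarrow> 'a set set \<Rightarrow> 'a set" where
  "tree_verts r T = insert r (\<Union> T)"

definition connected_on :: "'a set \<Rightarrow> 'a set set \<Rightarrow> bool" where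
  "connected_on W T \<longleftrightarrow> (\<forall>u\<in>W. \<forall>v\<in>W. \<exists>xs. is_path T xs \<and> hd xs = u \<and> last xs = v)"

definition acyclic_edges :: "'a set set \<Rightarrow> bool" where
  "acyclic_edges T \<longleftrightarrow> \<not> (\<exists>xs. is_path T xs \<and> length xs \<ge> 3 \<and> {last xs, hd xs} \<in> T)"

definition routing_tree :: "'a set set \<Rightarrow> 'a \<Rightarrow> 'a set \<Rightarrow> 'a set set \<Rightarrow> bool" where
  "routing_tree E r Dm T \<longleftrightarrow> T \<subseteq> E \<and> finite T \<and> Dm \<subseteq> tree_verts r T
     \<and> connected_on (tree_verts r T) T \<and> acyclic_edges T"

definition flow :: "'a set set \<Rightarrow> 'a \<Rightarrow> 'a set \<Rightarrow> ('a \<Rightarrow> nat) \<Rightarrow> 'a set \<Rightarrow> real" where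
  "flow T r Dm d e = real (\<Sum>v\<in>{v\<in>Dm. \<exists>xs. is_path T xs \<and> hd xs = v \<and> last xs = r \<and> e \<in> path_edges xs}. d v)"

definition tree_cost :: "('a set \<Rightarrow> real) \<Rightarrow> 'a \<Rightarrow> 'a set \<Rightarrow> ('a \<Rightarrow> nat) \<Rightarrow> (real \<Rightarrow> real) \<Rightarrow> 'a set set \<Rightarrow> real" where
  "tree_cost l r Dm d f T = (\<Sum>e\<in>T. l e * f (flow T r Dm d e))"

definition Acap :: "real \<Rightarrow> real \<Rightarrow> real" where
  "Acap M x = min x M"

definition rent_cost :: "('a set \<Rightarrow> real) \<Rightarrow> 'a \<Rightarrow> 'a set \<Rightarrow> ('a \<Rightarrow> nat) \<Rightarrow> real \<Rightarrow> 'a set set \<Rightarrow> real" where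
  "rent_cost l r Dm d M T = (\<Sum>e\<in>{e\<in>T. flow T r Dm d e < M}. l e * Acap M (flow T r Dm d e))"

definition buy_cost :: "('a set \<Rightarrow> real) \<Rightarrow> 'a \<Rightarrow> 'a set \<Rightarrow> ('a \<Rightarrow> nat) \<Rightarrow> real \<Rightarrow> 'a set set \<Rightarrow> real" where
  "buy_cost l r Dm d M T = (\<Sum>e\<in>{e\<in>T. flow T r Dm d e \<ge> M}. l e)"

end

theory Submission
  imports Defs
begin

text \<open>Under the cost $A_M$ a tree costs its rent plus $M$ times its normalized buy cost, and
  raising the cap from $M$ to $M'$ raises the cost of a tree by at least $(M'-M)B_{M'}$ and
  at most $(M'-M)B_M$. After the two passes, $T_i$ is no more expensive than $T_{i+1}$
  under $A_i$, and $T_{i+1}$ is no more expensive than $T_i$ under $A_{i+1}$. Comparing the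
  two inequalities through the cap-raising bounds yields $B_{i+1} \le B_i$, and then the
  decomposition of $A_i(T_i)$ yields $R_i \le R_{i+1}$.\<close>

lemma buy_cost_eq_sum:
  "finite T \<Longrightarrow> buy_cost l r Dm d M T
     = (\<Sum>e\<in>T. if M \<le> flow T r Dm d e then l e else 0)"
  by (simp add: buy_cost_def sum.inter_filter)

lemma rent_cost_eq_sum:
  "finite T \<Longrightarrow> rent_cost l r Dm d M T
     = (\<Sum>e\<in>T. if flow T r Dm d e < M then l e * flow T r Dm d e else 0)"
  by (simp add: rent_cost_def Acap_def sum.inter_filter)

lemma tree_cost_Acap_eq_rent_buy:
  assumes "finite T"
  shows "tree_cost l r Dm d (Acap M) T = rent_cost l r Dm d M T + M * buy_cost l r Dm d M T"
proof -
  have "tree_cost l r Dm d (Acap M) T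
      = (\<Sum>e\<in>T. (if flow T r Dm d e < M then l e * flow T r Dm d e else 0)
               + M * (if M \<le> flow T r Dm d e then l e else 0))"
    unfolding tree_cost_def Acap_def by (rule sum.cong) auto
  then show ?thesis
    using assms by (simp add: rent_cost_eq_sum buy_cost_eq_sum sum.distrib sum_distrib_left)
qed

lemma tree_cost_Acap_raise_cap_le:
  assumes "finite T" "\<forall>e\<in>T. l e \<ge> 0" "M \<le> M'"
  shows "tree_cost l r Dm d (Acap M') T
     \<le> tree_cost l r Dm d (Acap M) T + (M' - M) * buy_cost l r Dm d M T"
proof -
  have "tree_cost l r Dm d (Acap M') T
      \<le> (\<Sum>e\<in>T. l e * Acap M (flow T r Dm d e)
               + (M' - M) * (if M \<le> flow T r Dm d e then l e else 0))"
    unfolding tree_cost_def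
  proof (rule sum_mono)
    fix e assume "e \<in> T"
    then have "l e \<ge> 0" using assms(2) by blast
    moreover have "Acap M' (flow T r Dm d e)
        \<le> Acap M (flow T r Dm d e) + (M' - M) * (if M \<le> flow T r Dm d e then 1 else 0)"
      using assms(3) by (auto simp: Acap_def)
    ultimately show "l e * Acap M' (flow T r Dm d e)
        \<le> l e * Acap M (flow T r Dm d e) + (M' - M) * (if M \<le> flow T r Dm d e then l e else 0)"
      by (drule_tac mult_left_mono) (auto simp: algebra_simps)
  qed
  then show ?thesis
    using assms(1) by (simp add: tree_cost_def buy_cost_eq_sum sum.distrib sum_distrib_left)
qed

lemma tree_cost_Acap_raise_cap_ge:
  assumes "finite T" "\<forall>e\<in>T. l e \<ge> 0" "M \<le> M'"
  shows "tree_cost l r Dm d (Acap M) T + (M' - M) * buy_cost l r Dm d M' T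
     \<le> tree_cost l r Dm d (Acap M') T"
proof -
  have "(\<Sum>e\<in>T. l e * Acap M (flow T r Dm d e)
               + (M' - M) * (if M' \<le> flow T r Dm d e then l e else 0))
      \<le> tree_cost l r Dm d (Acap M') T"
    unfolding tree_cost_def
  proof (rule sum_mono)
    fix e assume "e \<in> T"
    then have "l e \<ge> 0" using assms(2) by blast
    moreover have "Acap M (flow T r Dm d e) + (M' - M) * (if M' \<le> flow T r Dm d e then 1 else 0)
        \<le> Acap M' (flow T r Dm d e)"
      using assms(3) by (auto simp: Acap_def)
    ultimately show "l e * Acap M (flow T r Dm d e)
          + (M' - M) * (if M' \<le> flow T r Dm d e then l e else 0)
        \<le> l e * Acap M' (flow T r Dm d e)"
      by (drule_tac mult_left_mono) (auto simp: algebra_simps)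
  qed
  then show ?thesis
    using assms(1) by (simp add: tree_cost_def buy_cost_eq_sum sum.distrib sum_distrib_left)
qed

lemma buy_rent_cost_exchange:
  assumes fin: "finite T" "finite T'"
    and nonneg: "\<forall>e\<in>T. l e \<ge> 0" "\<forall>e\<in>T'. l e \<ge> 0"
    and caps: "0 \<le> M" "M < M'"
    and cheaper_at_M: "tree_cost l r Dm d (Acap M) T \<le> tree_cost l r Dm d (Acap M) T'"
    and cheaper_at_M': "tree_cost l r Dm d (Acap M') T' \<le> tree_cost l r Dm d (Acap M') T"
  shows "buy_cost l r Dm d M' T' \<le> buy_cost l r Dm d M T
       \<and> rent_cost l r Dm d M T \<le> rent_cost l r Dm d M' T'"
proof
  have raise_T: "tree_cost l r Dm d (Acap M') T
      \<le> tree_cost l r Dm d (Acap M) T + (M' - M) * buy_cost l r Dm d M T"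
    using tree_cost_Acap_raise_cap_le[OF fin(1) nonneg(1)] caps by simp
  have raise_T': "tree_cost l r Dm d (Acap M) T' + (M' - M) * buy_cost l r Dm d M' T'
      \<le> tree_cost l r Dm d (Acap M') T'"
    using tree_cost_Acap_raise_cap_ge[OF fin(2) nonneg(2)] caps by simp
  have "(M' - M) * buy_cost l r Dm d M' T' \<le> (M' - M) * buy_cost l r Dm d M T"
    using raise_T raise_T' cheaper_at_M cheaper_at_M' by linarith
  then show buy: "buy_cost l r Dm d M' T' \<le> buy_cost l r Dm d M T"
    using caps by simp
  have "rent_cost l r Dm d M T + M * buy_cost l r Dm d M T
      \<le> rent_cost l r Dm d M' T' + M * buy_cost l r Dm d M' T'"
    using raise_T' cheaper_at_M
    by (simp add: tree_cost_Acap_eq_rent_buy[OF fin(1)] tree_cost_Acap_eq_rent_buy[OF fin(2)]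
        algebra_simps)
  moreover have "M * buy_cost l r Dm d M' T' \<le> M * buy_cost l r Dm d M T"
    using buy caps by (simp add: mult_left_mono)
  ultimately show "rent_cost l r Dm d M T \<le> rent_cost l r Dm d M' T'"
    by linarith
qed

lemma forward_pass_invariant:
  fixes C :: "nat \<Rightarrow> 'b \<Rightarrow> 'c::ord" and K j :: nat
  assumes "\<forall>i\<le>K. P (T0 i)" "T1 0 = T0 0"
    and step: "\<forall>i\<in>{1..K}. T1 i = (if C i (T1 (i - 1)) < C i (T0 i) then T1 (i - 1) else T0 i)"
    and "j \<le> K"
  shows "P (T1 j)"
  using \<open>j \<le> K\<close>
proof (induction j)
  case 0
  then show ?case using assms(1,2) by simp
next
  case (Suc j)
  then have "T1 (Suc j) = T1 j \<or> T1 (Suc j) = T0 (Suc j)"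
    using step by (metis atLeastAtMost_iff diff_Suc_1 le_add1 plus_1_eq_Suc)
  then show ?case using Suc assms(1) by auto
qed

lemma backward_pass_invariant:
  fixes C :: "nat \<Rightarrow> 'b \<Rightarrow> 'c::ord" and K j :: nat
  assumes "\<forall>i\<le>K. P (T1 i)" "T2 K = T1 K"
    and step: "\<forall>i<K. T2 i = (if C i (T2 (i + 1)) < C i (T1 i) then T2 (i + 1) else T1 i)"
    and "j \<le> K"
  shows "P (T2 j)"
  using \<open>j \<le> K\<close>
proof (induction j rule: inc_induct)
  case base
  then show ?case using assms(1,2) by simp
next
  case (step n)
  then have "T2 n = T2 (Suc n) \<or> T2 n = T1 n"
    using assms(3) by simp
  then show ?case using step assms(1) by auto
qed

lemma backward_pass_local_optimality:
  fixes C :: "nat \<Rightarrow> 'b \<Rightarrow> 'c::linorder" and K i :: nat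
  assumes step2: "\<forall>i\<in>{1..K}. T1 i = (if C i (T1 (i - 1)) < C i (T0 i) then T1 (i - 1) else T0 i)"
    and step3_K: "T2 K = T1 K"
    and step3: "\<forall>i<K. T2 i = (if C i (T2 (i + 1)) < C i (T1 i) then T2 (i + 1) else T1 i)"
    and "i < K"
  shows "C i (T2 i) \<le> C i (T2 (i + 1)) \<and> C (i + 1) (T2 (i + 1)) \<le> C (i + 1) (T2 i)"
proof
  show "C i (T2 i) \<le> C i (T2 (i + 1))"
    using step3 \<open>i < K\<close> by auto
  have "C (i + 1) (T2 (i + 1)) \<le> C (i + 1) (T1 (i + 1))"
  proof (cases "i + 1 = K")
    case True
    then show ?thesis using step3_K by simp
  next
    case False
    with \<open>i < K\<close> have "T2 (i + 1)
        = (if C (i + 1) (T2 (i + 2)) < C (i + 1) (T1 (i + 1)) then T2 (i + 2) else T1 (i + 1))"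
      using step3 by (simp add: numeral_2_eq_2)
    then show ?thesis by (simp add: less_imp_le)
  qed
  also have "\<dots> \<le> C (i + 1) (T1 i)"
    using step2 \<open>i < K\<close> by auto
  finally have "C (i + 1) (T2 (i + 1)) \<le> C (i + 1) (T1 i)" .
  moreover have "T2 i = T2 (i + 1) \<or> T2 i = T1 i"
    using step3 \<open>i < K\<close> by simp
  ultimately show "C (i + 1) (T2 (i + 1)) \<le> C (i + 1) (T2 i)"
    by auto
qed

theorem lemma4:
  fixes V :: "'a set" and E :: "'a set set" and l :: "'a set \<Rightarrow> real"
    and r :: 'a and Dm :: "'a set" and d :: "'a \<Rightarrow> nat"
    and eps lam :: real and K :: nat
    and T0 T1 T2 :: "nat \<Rightarrow> 'a set set"
  assumes graph: "is_graph V E"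
    and lens: "\<forall>e\<in>E. l e \<ge> 0"
    and root: "r \<in> V"
    and dem: "Dm \<subseteq> V" "\<forall>v\<in>Dm. d v > 0"
    and eps_pos: "eps > 0"
    and K_def: "K = nat \<lceil>log (1 + eps) (real (\<Sum>v\<in>Dm. d v))\<rceil>"
    and approx: "\<forall>i\<le>K. routing_tree E r Dm (T0 i) \<and>
        (\<forall>T. routing_tree E r Dm T \<longrightarrow>
           tree_cost l r Dm d (Acap ((1 + eps) ^ i)) (T0 i)
             \<le> lam * tree_cost l r Dm d (Acap ((1 + eps) ^ i)) T)"
    and step2_0: "T1 0 = T0 0"
    and step2: "\<forall>i\<in>{1..K}. T1 i =
        (if tree_cost l r Dm d (Acap ((1 + eps) ^ i)) (T1 (i - 1))
              < tree_cost l r Dm d (Acap ((1 + eps) ^ i)) (T0 i)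
         then T1 (i - 1) else T0 i)"
    and step3_K: "T2 K = T1 K"
    and step3: "\<forall>i<K. T2 i =
        (if tree_cost l r Dm d (Acap ((1 + eps) ^ i)) (T2 (i + 1))
              < tree_cost l r Dm d (Acap ((1 + eps) ^ i)) (T1 i)
         then T2 (i + 1) else T1 i)"
    and i: "i < K"
  shows "buy_cost l r Dm d ((1 + eps) ^ i) (T2 i) \<ge> buy_cost l r Dm d ((1 + eps) ^ (i + 1)) (T2 (i + 1))
       \<and> rent_cost l r Dm d ((1 + eps) ^ i) (T2 i) \<le> rent_cost l r Dm d ((1 + eps) ^ (i + 1)) (T2 (i + 1))"
proof -
  define C where "C j T = tree_cost l r Dm d (Acap ((1 + eps) ^ j)) T" for j T
  define P where "P T \<longleftrightarrow> finite T \<and> (\<forall>e\<in>T. l e \<ge> 0)" for T :: "'a set set"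
  note passes = step2[folded C_def] step3_K step3[folded C_def]
  have "\<forall>j\<le>K. P (T0 j)"
    using approx lens by (fastforce simp: P_def routing_tree_def)
  then have "\<forall>j\<le>K. P (T1 j)"
    using forward_pass_invariant[OF _ step2_0 passes(1)] by blast
  then have P_T2: "P (T2 j)" if "j \<le> K" for j
    using backward_pass_invariant[OF _ passes(2,3) that] by blast
  have "0 \<le> (1 + eps) ^ i" "(1 + eps) ^ i < (1 + eps) ^ (i + 1)"
    using eps_pos by simp_all
  then show ?thesis
    using buy_rent_cost_exchange[of "T2 i" "T2 (i + 1)"]
      backward_pass_local_optimality[OF passes i] P_T2[of i] P_T2[of "i + 1"] i
    by (simp add: P_def C_def)
qed

end
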